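(* Suppose that for some increasing function $\psi$ as in the context, some positive finite numbers $I_{ij}$ ($i\ne j\in\mathcal N_0$) and some $r\ge1$, the normalized LLRs converge $r$-completely: for all $i\ne j$, $$\lim_{n\to\infty}\sum_{t=n}^\infty t^{r-1}\mathsf P_i\Big(\Big|\frac{\lambda_{ij}(t)}{\psi(t)}-I_{ij}\Big|>\varepsilon\Big)=0\quad\text{for every }\varepsilon>0.$$ If the thresholds of the MSPRT $D_*=(T_*,d_* )$ satisfy $\mathsf P_i(d_*=j)\le\alpha_{ij}$ for all $i\ne j$ and $a_{ji}\sim\log(1/\alpha_{ji})$ as $\alpha_{\max}\to0$ (in particular $a_{ji}=\log(1/\alpha_{ji})$), then for all $i\in\mathcal N_0$, as $\alpha_{\max}\to0$, $$\mathsf E_i[T_*^r]\sim\Big[\Psi\Big(\max_{j\in\mathcal N_0\setminus i}\frac{|\log\alpha_{ji}|}{I_{ij}}\Big)\Big]^r\sim\inf_{D\in\mathbb C_{\rm sim}(\boldsymbol\alpha)}\mathsf E_i[T^r].$$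
   Context: Observations $X_1,X_2,\dots$, $\mathcal F_n=\sigma(X_1,\dots,X_n)$, $\mathbf X_1^n=(X_1,\dots,X_n)$. There are $N+1$ simple hypotheses $H_i:\mathsf P=\mathsf P_i$, $i\in\mathcal N_0=\{0,1,\dots,N\}$ ($N\ge1$), where $\mathsf P_i$ restricted to $\mathcal F_n$ has density $p_{i,n}(\mathbf X_1^n)=\prod_{t=1}^n f_{i,t}(X_t\mid\mathbf X_1^{t-1})$, these restrictions being mutually absolutely continuous; $\mathsf E_i$ is expectation under $\mathsf P_i$; $\lambda_{ij}(n)=\log[p_{i,n}(\mathbf X_1^n)/p_{j,n}(\mathbf X_1^n)]$. A test $D=(T,d)$ consists of a stopping time $T$ w.r.t. $(\mathcal F_n)$ and an $\mathcal F_T$-measurable decision $d\in\mathcal N_0$. For $\boldsymbol\alpha=(\alpha_{ij})_{i\ne j}$, $\alpha_{ij}\in(0,1)$: $\mathbb C_{\rm sim}(\boldsymbol\alpha)=\{D:\mathsf P_i(d=j)\le\alpha_{ij}\ \forall i\ne j\}$, $\alpha_{\max}=\max_{i\ne j}\alpha_{ij}$; limits as $\alpha_{\max}\to0$ are along families with $|\log\alpha_{ij}|/|\log\alpha_{\max}|\to c_{ij}\in(0,1]$. The function $\psi:\mathbb R_+\to\mathbb R_+$ is increasing and one-to-one with $\psi(t)\to\infty$; $\Psi=\psi^{-1}$, $\Psi(t)\to\infty$, and $\lim_{\delta\to1}\lim_{t\to\infty}\Psi(\delta t)/\Psi(t)=1$. Matrix SPRT (MSPRT): given positive thresholds $a_{ij}$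 ($i\ne j$), let $T_i=\inf\{n\ge1:\lambda_{ij}(n)\ge a_{ji}\text{ for all }j\in\mathcal N_0\setminus i\}$, $T_*=\min_{k\in\mathcal N_0}T_k$, and $d_*=i$ if $T_*=T_i$ (ties broken by any fixed rule). *)

theory Defs
  imports "HOL-Probability.Probability"
begin

definition obs_filt :: "'a measure \<Rightarrow> 'b measure \<Rightarrow> (nat \<Rightarrow> 'a \<Rightarrow> 'b) \<Rightarrow> nat \<Rightarrow> 'a measure" where
  "obs_filt M S X n =
     sigma (space M) (\<Union>t\<in>{1..n}. {X t -` B \<inter> space M | B. B \<in> sets S})"

definition is_stopping_time :: "(nat \<Rightarrow> 'a measure) \<Rightarrow> ('a \<Rightarrow> enat) \<Rightarrow> bool" where
  "is_stopping_time F T \<longleftrightarrow> (\<forall>n. {\<omega> \<in> space (F n). T \<omega> \<le> enat n} \<in> sets (F n))"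

definition is_FT_decision :: "'a measure \<Rightarrow> (nat \<Rightarrow> 'a measure) \<Rightarrow> ('a \<Rightarrow> enat) \<Rightarrow> nat \<Rightarrow> ('a \<Rightarrow> nat) \<Rightarrow> bool" where
  "is_FT_decision M F T N d \<longleftrightarrow>
     (\<forall>\<omega>\<in>space M. d \<omega> \<le> N) \<and>
     (\<forall>j. {\<omega> \<in> space M. d \<omega> = j} \<in> sets M \<and>
          (\<forall>n. {\<omega> \<in> space M. d \<omega> = j \<and> T \<omega> \<le> enat n} \<in> sets (F n)))"

definition tpow :: "real \<Rightarrow> enat \<Rightarrow> ennreal" where
  "tpow r t = (case t of enat n \<Rightarrow> ennreal (real n powr r) | \<infinity> \<Rightarrow> \<infinity>)"

definition mom :: "'a measure \<Rightarrow> real \<Rightarrow> ('a \<Rightarrow> enat) \<Rightarrow> ennreal" where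
  "mom Q r T = (\<integral>\<^sup>+ \<omega>. tpow r (T \<omega>) \<partial>Q)"

definition Csim :: "'a measure \<Rightarrow> (nat \<Rightarrow> 'a measure) \<Rightarrow> (nat \<Rightarrow> 'a measure) \<Rightarrow> nat
     \<Rightarrow> (nat \<Rightarrow> nat \<Rightarrow> real) \<Rightarrow> (('a \<Rightarrow> enat) \<times> ('a \<Rightarrow> nat)) set" where
  "Csim M F P N \<alpha> = {(T, d). is_stopping_time F T \<and> is_FT_decision M F T N d \<and>
      (\<forall>i\<le>N. \<forall>j\<le>N. i \<noteq> j \<longrightarrow> measure (P i) {\<omega> \<in> space M. d \<omega> = j} \<le> \<alpha> i j)}"

definition msprt_Ti :: "nat \<Rightarrow> (nat \<Rightarrow> nat \<Rightarrow> nat \<Rightarrow> 'a \<Rightarrow> real) \<Rightarrow> (nat \<Rightarrow> nat \<Rightarrow> real)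
     \<Rightarrow> nat \<Rightarrow> 'a \<Rightarrow> enat" where
  "msprt_Ti N lam a i \<omega> =
     (if \<exists>n\<ge>1. \<forall>j\<le>N. j \<noteq> i \<longrightarrow> lam i j n \<omega> \<ge> a j i
      then enat (LEAST n. n \<ge> 1 \<and> (\<forall>j\<le>N. j \<noteq> i \<longrightarrow> lam i j n \<omega> \<ge> a j i))
      else \<infinity>)"

definition msprt_T :: "nat \<Rightarrow> (nat \<Rightarrow> nat \<Rightarrow> nat \<Rightarrow> 'a \<Rightarrow> real) \<Rightarrow> (nat \<Rightarrow> nat \<Rightarrow> real) \<Rightarrow> 'a \<Rightarrow> enat" where
  "msprt_T N lam a \<omega> = Min ((\<lambda>k. msprt_Ti N lam a k \<omega>) ` {0..N})"

text \<open>A decision rule for the MSPRT: d_* = i whenever T_* = T_i < \<infinity> (ties broken by a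
  rule that is admissible as a decision, i.e. d_* is F_T_*-measurable with values in {0..N}).\<close>
definition msprt_decision :: "'a measure \<Rightarrow> (nat \<Rightarrow> 'a measure) \<Rightarrow> nat
     \<Rightarrow> (nat \<Rightarrow> nat \<Rightarrow> nat \<Rightarrow> 'a \<Rightarrow> real) \<Rightarrow> (nat \<Rightarrow> nat \<Rightarrow> real) \<Rightarrow> ('a \<Rightarrow> nat) \<Rightarrow> bool" where
  "msprt_decision M F N lam a d \<longleftrightarrow>
     is_FT_decision M F (msprt_T N lam a) N d \<and>
     (\<forall>\<omega>\<in>space M. msprt_T N lam a \<omega> < \<infinity> \<longrightarrow>
        msprt_Ti N lam a (d \<omega>) \<omega> = msprt_T N lam a \<omega>)"

end

theory Submission
  imports Defs
begin

(* Upper bound: before the MSPRT stops, some LLR lambda_ij(n) lies below its threshold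
   a_ji ~ |log alpha_ji|.  Once psi(n) exceeds delta * max_j |log alpha_ji| / I_ij with delta > 1,
   this forces lambda_ij(n)/psi(n) to deviate from I_ij by a fixed fraction of I_ij, and r-complete
   convergence bounds the resulting tail sum for E_i[T_*^r] by a constant.
   Lower bound: for any test in C_sim(alpha) and n ~ Psi(delta * max_j ...) with delta < 1, a change
   of measure from P_i to the alternative P_j attaining the maximum shows P_i(T <= n) -> 0, so
   E_i[T^r] >= n^r (1 - o(1)).
   As delta -> 1 both bounds meet, because Psi(delta t)/Psi(t) -> L(delta) -> 1. *)

lemma space_obs_filt: "space (obs_filt M S X n) = space M"
  unfolding obs_filt_def by (rule space_measure_of) auto

lemma sets_obs_filt_subset:
  assumes "\<And>t. X t \<in> M \<rightarrow>\<^sub>M S"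
  shows "sets (obs_filt M S X n) \<subseteq> sets M"
proof -
  have gen: "(\<Union>t\<in>{1..n}. {X t -` B \<inter> space M | B. B \<in> sets S}) \<subseteq> sets M"
    using assms measurable_sets by blast
  have "sets (obs_filt M S X n) =
      sigma_sets (space M) (\<Union>t\<in>{1..n}. {X t -` B \<inter> space M | B. B \<in> sets S})"
    unfolding obs_filt_def by (rule sets_measure_of) auto
  then show ?thesis using sets.sigma_sets_subset[OF gen] by simp
qed

lemma powr_Suc_diff_le:
  fixes x r :: real
  assumes x: "x \<ge> 1" and r: "r \<ge> 1"
  shows "(x + 1) powr r - x powr r \<le> r * 2 powr (r - 1) * x powr (r - 1)"
proof -
  have "\<And>y. x \<le> y \<Longrightarrow> y \<le> x + 1 \<Longrightarrow> ((\<lambda>z. z powr r) has_real_derivative r * y powr (r - 1)) (at y)"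
    using x by (intro has_real_derivative_powr) auto
  then obtain z where z: "x < z" "z < x + 1" "(x + 1) powr r - x powr r = r * z powr (r - 1)"
    using MVT2[of x "x + 1" "\<lambda>z. z powr r" "\<lambda>y. r * y powr (r - 1)"] by auto
  have "z powr (r - 1) \<le> (2 * x) powr (r - 1)"
    using z x r by (intro powr_mono2) auto
  also have "\<dots> = 2 powr (r - 1) * x powr (r - 1)"
    using x by (simp add: powr_mult)
  finally show ?thesis
    using z(3) r by (simp add: mult_left_mono)
qed

section \<open>Moments of stopping times\<close>

lemma tpow_mono: "0 \<le> r \<Longrightarrow> s \<le> t \<Longrightarrow> tpow r s \<le> tpow r t"
  by (cases s; cases t) (auto simp: tpow_def intro!: ennreal_leI powr_mono2)

lemma powr_le_tail_indicator_sum: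
  fixes r :: real and n0 m :: nat
  assumes r: "r \<ge> 1" and n0: "n0 \<ge> 1" and B: "\<And>n. n0 \<le> n \<Longrightarrow> n < m \<Longrightarrow> \<omega> \<in> B n"
  shows "ennreal (real m powr r) \<le> ennreal (real n0 powr r) +
    (\<Sum>t. ennreal (r * 2 powr (r - 1) * real (Suc t) powr (r - 1)) * indicator (B (Suc t)) \<omega>)"
    (is "_ \<le> _ + (\<Sum>t. ennreal (?w t) * _)")
proof (cases "m \<le> n0")
  case True
  then have "ennreal (real m powr r) \<le> ennreal (real n0 powr r)"
    using r by (intro ennreal_leI powr_mono2) auto
  then show ?thesis by (simp add: add_increasing2)
next
  case False
  let ?A = "{n0 - 1..<m - 1}"
  have w_nn: "0 \<le> ?w t" for t using r by simp
  have "real m powr r - real n0 powr r = (\<Sum>t\<in>?A. real (Suc (Suc t)) powr r - real (Suc t) powr r)"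
    using sum_Suc_diff'[of "n0 - 1" "m - 1" "\<lambda>t. real (Suc t) powr r"] False n0 by simp
  also have "\<dots> \<le> (\<Sum>t\<in>?A. ?w t)"
  proof (rule sum_mono)
    fix t
    have "real (Suc (Suc t)) = real (Suc t) + 1" by simp
    then show "real (Suc (Suc t)) powr r - real (Suc t) powr r \<le> ?w t"
      using powr_Suc_diff_le[OF _ r, of "real (Suc t)"] by simp
  qed
  finally have "ennreal (real m powr r - real n0 powr r) \<le> (\<Sum>t\<in>?A. ennreal (?w t))"
    using w_nn by (simp add: ennreal_leI)
  also have "\<dots> = (\<Sum>t\<in>?A. ennreal (?w t) * indicator (B (Suc t)) \<omega>)"
    using B n0 by (intro sum.cong) auto
  also have "\<dots> \<le> (\<Sum>t. ennreal (?w t) * indicator (B (Suc t)) \<omega>)"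
    by (rule sum_le_suminf) (auto intro: summableI)
  finally have "ennreal (real n0 powr r) + ennreal (real m powr r - real n0 powr r) \<le>
      ennreal (real n0 powr r) + (\<Sum>t. ennreal (?w t) * indicator (B (Suc t)) \<omega>)"
    by (rule add_left_mono)
  moreover have "real n0 powr r \<le> real m powr r"
    using False r by (intro powr_mono2) auto
  ultimately show ?thesis by (simp flip: ennreal_plus)
qed

lemma tpow_le_tail_indicator_sum:
  assumes r: "r \<ge> 1" and n0: "n0 \<ge> 1" and B: "\<And>n. n0 \<le> n \<Longrightarrow> enat n < s \<Longrightarrow> \<omega> \<in> B n"
  shows "tpow r s \<le> ennreal (real n0 powr r) +
    (\<Sum>t. ennreal (r * 2 powr (r - 1) * real (Suc t) powr (r - 1)) * indicator (B (Suc t)) \<omega>)"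
    (is "_ \<le> ?h")
proof (cases s)
  case (enat m)
  then show ?thesis
    using powr_le_tail_indicator_sum[OF r n0, of m \<omega> B] B by (simp add: tpow_def)
next
  case infinity
  have "?h = \<top>"
  proof (rule ccontr)
    assume "?h \<noteq> \<top>"
    then obtain x where x: "?h = ennreal x" "x \<ge> 0" by (cases ?h) auto
    define m where "m = Suc (nat \<lceil>x\<rceil>)"
    have "ennreal (real m powr r) \<le> ennreal x"
      using powr_le_tail_indicator_sum[OF r n0, of m \<omega> B] B infinity x(1) by simp
    then have "real m powr r \<le> x" using x(2) by (simp add: ennreal_le_iff)
    moreover have "real m \<le> real m powr r"
      using powr_mono[OF r, of "real m"] by (simp add: m_def)
    moreover have "x < real m" unfolding m_def by linarith
    ultimately show False by linarith
  qed
  then show ?thesis by simp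
qed

lemma mom_le_tail_sum:
  assumes Q: "prob_space Q" and r: "r \<ge> 1" and n0: "n0 \<ge> 1"
    and B_sets: "\<And>n. B n \<in> sets Q"
    and B: "\<And>\<omega> n. \<omega> \<in> space Q \<Longrightarrow> n0 \<le> n \<Longrightarrow> enat n < T \<omega> \<Longrightarrow> \<omega> \<in> B n"
    and summable: "summable (\<lambda>t. real (Suc t) powr (r - 1) * measure Q (B (Suc t)))"
  shows "mom Q r T \<le> ennreal (real n0 powr r +
    r * 2 powr (r - 1) * (\<Sum>t. real (Suc t) powr (r - 1) * measure Q (B (Suc t))))"
proof -
  interpret prob_space Q by (fact Q)
  define w where "w t = r * 2 powr (r - 1) * real (Suc t) powr (r - 1)" for t
  have w_nn: "0 \<le> w t" for t using r by (simp add: w_def)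
  have [measurable]: "B n \<in> sets Q" for n by (fact B_sets)
  have "mom Q r T \<le> (\<integral>\<^sup>+ \<omega>. ennreal (real n0 powr r) + (\<Sum>t. ennreal (w t) * indicator (B (Suc t)) \<omega>) \<partial>Q)"
    unfolding mom_def w_def
  proof (rule nn_integral_mono)
    fix \<omega> assume "\<omega> \<in> space Q"
    then show "tpow r (T \<omega>) \<le> ennreal (real n0 powr r) +
        (\<Sum>t. ennreal (r * 2 powr (r - 1) * real (Suc t) powr (r - 1)) * indicator (B (Suc t)) \<omega>)"
      using B by (intro tpow_le_tail_indicator_sum[OF r n0])
  qed
  also have "\<dots> = ennreal (real n0 powr r) + (\<Sum>t. ennreal (w t) * emeasure Q (B (Suc t)))"
    by (simp add: nn_integral_add nn_integral_suminf nn_integral_cmult_indicator emeasure_space_1)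
  also have "(\<Sum>t. ennreal (w t) * emeasure Q (B (Suc t))) = (\<Sum>t. ennreal (w t * measure Q (B (Suc t))))"
    using w_nn by (simp add: emeasure_eq_measure ennreal_mult)
  also have "\<dots> = ennreal (\<Sum>t. w t * measure Q (B (Suc t)))"
  proof (rule suminf_ennreal2)
    show "summable (\<lambda>t. w t * measure Q (B (Suc t)))"
      using summable_mult[OF summable, of "r * 2 powr (r - 1)"] by (simp add: w_def mult.assoc)
  qed (use w_nn in simp)
  also have "(\<Sum>t. w t * measure Q (B (Suc t))) =
      r * 2 powr (r - 1) * (\<Sum>t. real (Suc t) powr (r - 1) * measure Q (B (Suc t)))"
    using suminf_mult[OF summable, of "r * 2 powr (r - 1)"] by (simp add: w_def mult.assoc)
  also have "ennreal (real n0 powr r) + ennreal \<dots> = ennreal (real n0 powr r +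
      r * 2 powr (r - 1) * (\<Sum>t. real (Suc t) powr (r - 1) * measure Q (B (Suc t))))"
    using r suminf_nonneg[OF summable] by (intro ennreal_plus[symmetric]) simp_all
  finally show ?thesis .
qed

lemma mom_ge_not_stopped:
  assumes Q: "prob_space Q" and r: "r \<ge> 0" and S: "{\<omega> \<in> space Q. T \<omega> \<le> enat n} \<in> sets Q"
  shows "ennreal (real (Suc n) powr r * (1 - measure Q {\<omega> \<in> space Q. T \<omega> \<le> enat n})) \<le> mom Q r T"
proof -
  interpret prob_space Q by (fact Q)
  let ?S = "{\<omega> \<in> space Q. T \<omega> \<le> enat n}"
  have "ennreal (real (Suc n) powr r) * indicator (space Q - ?S) \<omega> \<le> tpow r (T \<omega>)" for \<omega>
    using tpow_mono[OF r, of "enat (Suc n)" "T \<omega>"] by (cases "T \<omega>") (auto simp: tpow_def indicator_def)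
  then have "(\<integral>\<^sup>+ \<omega>. ennreal (real (Suc n) powr r) * indicator (space Q - ?S) \<omega> \<partial>Q) \<le> mom Q r T"
    unfolding mom_def by (rule nn_integral_mono)
  moreover have "emeasure Q (space Q - ?S) = ennreal (1 - measure Q ?S)"
    using prob_compl[OF S] emeasure_eq_measure by simp
  ultimately show ?thesis
    using S by (simp add: nn_integral_cmult_indicator ennreal_mult)
qed

section \<open>The MSPRT and regular variation\<close>

lemma msprt_T_le_Ti: "i \<le> N \<Longrightarrow> msprt_T N lam a \<omega> \<le> msprt_Ti N lam a i \<omega>"
  unfolding msprt_T_def by (rule Min_le) auto

lemma not_stopped_before_msprt_Ti:
  assumes "1 \<le> n" "enat n < msprt_Ti N lam a i \<omega>"
  shows "\<exists>j\<le>N. j \<noteq> i \<and> lam i j n \<omega> < a j i"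
proof (cases "\<exists>n\<ge>1. \<forall>j\<le>N. j \<noteq> i \<longrightarrow> lam i j n \<omega> \<ge> a j i")
  case True
  then have "n < (LEAST n. n \<ge> 1 \<and> (\<forall>j\<le>N. j \<noteq> i \<longrightarrow> lam i j n \<omega> \<ge> a j i))"
    using assms(2) by (simp add: msprt_Ti_def)
  then show ?thesis using not_less_Least assms(1) by (fastforce simp: not_le)
next
  case False
  then have "\<not> (\<forall>j\<le>N. j \<noteq> i \<longrightarrow> lam i j n \<omega> \<ge> a j i)"
    using assms(1) by blast
  then show ?thesis by (auto simp: not_le)
qed

lemma msprt_in_Csim:
  assumes F_space: "\<And>n. space (F n) = space M" and d: "msprt_decision M F N lam a d"
    and err: "\<And>i j. i \<le> N \<Longrightarrow> j \<le> N \<Longrightarrow> i \<noteq> j \<Longrightarrow> measure (P i) {\<omega> \<in> space M. d \<omega> = j} \<le> \<alpha> i j"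
  shows "(msprt_T N lam a, d) \<in> Csim M F P N \<alpha>"
proof -
  have dec: "is_FT_decision M F (msprt_T N lam a) N d"
    using d unfolding msprt_decision_def by auto
  have "{\<omega> \<in> space (F n). msprt_T N lam a \<omega> \<le> enat n} =
      (\<Union>j\<in>{..N}. {\<omega> \<in> space M. d \<omega> = j \<and> msprt_T N lam a \<omega> \<le> enat n})" for n
    using dec F_space unfolding is_FT_decision_def by auto
  then have "is_stopping_time F (msprt_T N lam a)"
    using dec unfolding is_stopping_time_def is_FT_decision_def by auto
  then show ?thesis unfolding Csim_def using dec err by auto
qed

lemma eventually_ratio_limit_near_one:
  fixes \<Psi> L :: "real \<Rightarrow> real"
  assumes inner: "\<forall>\<^sub>F \<delta> in at 1. ((\<lambda>t. \<Psi> (\<delta> * t) / \<Psi> t) \<longlongrightarrow> L \<delta>) at_top"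
    and outer: "(L \<longlongrightarrow> 1) (at 1)" and \<eta>: "\<eta> > 0"
  shows "\<forall>\<^sub>F \<delta> in at 1. ((\<lambda>t. \<Psi> (\<delta> * t) / \<Psi> t) \<longlongrightarrow> L \<delta>) at_top \<and>
    1 - \<eta> < L \<delta> powr r \<and> L \<delta> powr r < 1 + \<eta>"
proof -
  have "((\<lambda>\<delta>. L \<delta> powr r) \<longlongrightarrow> 1 powr r) (at 1)"
    by (intro tendsto_powr outer tendsto_const) simp
  then have "((\<lambda>\<delta>. L \<delta> powr r) \<longlongrightarrow> 1) (at 1)" by simp
  then have "\<forall>\<^sub>F \<delta> in at 1. 1 - \<eta> < L \<delta> powr r" "\<forall>\<^sub>F \<delta> in at 1. L \<delta> powr r < 1 + \<eta>"
    using \<eta> by (auto intro: order_tendstoD)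
  with inner show ?thesis by eventually_elim blast
qed

lemma regular_ratio_above_one:
  fixes \<Psi> L :: "real \<Rightarrow> real"
  assumes "\<forall>\<^sub>F \<delta> in at 1. ((\<lambda>t. \<Psi> (\<delta> * t) / \<Psi> t) \<longlongrightarrow> L \<delta>) at_top" "(L \<longlongrightarrow> 1) (at 1)" "\<eta> > 0"
  obtains \<delta> where "1 < \<delta>" "((\<lambda>t. \<Psi> (\<delta> * t) / \<Psi> t) \<longlongrightarrow> L \<delta>) at_top" "L \<delta> powr r < 1 + \<eta>"
proof -
  have "\<forall>\<^sub>F \<delta> in at_right 1. ((\<lambda>t. \<Psi> (\<delta> * t) / \<Psi> t) \<longlongrightarrow> L \<delta>) at_top \<and>
      1 - \<eta> < L \<delta> powr r \<and> L \<delta> powr r < 1 + \<eta>"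
    using eventually_ratio_limit_near_one[OF assms] by (simp add: eventually_at_split)
  with eventually_at_right_less[of "1::real"]
  have "\<forall>\<^sub>F \<delta> in at_right 1. 1 < \<delta> \<and> ((\<lambda>t. \<Psi> (\<delta> * t) / \<Psi> t) \<longlongrightarrow> L \<delta>) at_top \<and> L \<delta> powr r < 1 + \<eta>"
    by eventually_elim auto
  then show thesis
    using that eventually_happens'[OF trivial_limit_at_right_real] by blast
qed

lemma regular_ratio_below_one:
  fixes \<Psi> L :: "real \<Rightarrow> real"
  assumes "\<forall>\<^sub>F \<delta> in at 1. ((\<lambda>t. \<Psi> (\<delta> * t) / \<Psi> t) \<longlongrightarrow> L \<delta>) at_top" "(L \<longlongrightarrow> 1) (at 1)" "\<eta> > 0"
  obtains \<delta> where "0 < \<delta>" "\<delta> < 1" "((\<lambda>t. \<Psi> (\<delta> * t) / \<Psi> t) \<longlongrightarrow> L \<delta>) at_top" "1 - \<eta> < L \<delta> powr r"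
proof -
  have "\<forall>\<^sub>F \<delta> in at_left 1. ((\<lambda>t. \<Psi> (\<delta> * t) / \<Psi> t) \<longlongrightarrow> L \<delta>) at_top \<and>
      1 - \<eta> < L \<delta> powr r \<and> L \<delta> powr r < 1 + \<eta>"
    using eventually_ratio_limit_near_one[OF assms] by (simp add: eventually_at_split)
  with eventually_at_left_real[OF zero_less_one]
  have "\<forall>\<^sub>F \<delta> in at_left 1. \<delta> \<in> {0<..<1} \<and> ((\<lambda>t. \<Psi> (\<delta> * t) / \<Psi> t) \<longlongrightarrow> L \<delta>) at_top \<and>
      1 - \<eta> < L \<delta> powr r"
    by eventually_elim auto
  then show thesis
    using that eventually_happens'[OF trivial_limit_at_left_real] by auto
qed

lemma tendsto_one_if_eventually_near:
  fixes f :: "nat \<Rightarrow> real"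
  assumes near: "\<And>\<eta>. 0 < \<eta> \<Longrightarrow> \<eta> < 1 \<Longrightarrow> \<forall>\<^sub>F k in sequentially. 1 - \<eta> \<le> f k \<and> f k \<le> 1 + \<eta>"
  shows "f \<longlonglongrightarrow> 1"
proof (rule order_tendstoI)
  fix y :: real assume y: "y < 1"
  define \<eta> where "\<eta> = min (1 - y) 1 / 2"
  have "0 < \<eta>" "\<eta> < 1" "y < 1 - \<eta>" using y by (auto simp: \<eta>_def min_def field_simps)
  then show "\<forall>\<^sub>F k in sequentially. y < f k"
    using near[of \<eta>] by (auto elim: eventually_mono)
next
  fix y :: real assume y: "1 < y"
  define \<eta> where "\<eta> = min (y - 1) 1 / 2"
  have "0 < \<eta>" "\<eta> < 1" "1 + \<eta> < y" using y by (auto simp: \<eta>_def min_def field_simps)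
  then show "\<forall>\<^sub>F k in sequentially. f k < y"
    using near[of \<eta>] by (auto elim: eventually_mono)
qed

lemma tendsto_divide_one_if_sandwiched:
  fixes f B :: "nat \<Rightarrow> real"
  assumes B: "\<And>k. 0 < B k"
    and near: "\<And>\<eta>. 0 < \<eta> \<Longrightarrow> \<eta> < 1 \<Longrightarrow> \<forall>\<^sub>F k in sequentially. (1 - \<eta>) * B k \<le> f k \<and> f k \<le> (1 + \<eta>) * B k"
  shows "(\<lambda>k. f k / B k) \<longlonglongrightarrow> 1"
proof (rule tendsto_one_if_eventually_near)
  fix \<eta> :: real assume "0 < \<eta>" "\<eta> < 1"
  from near[OF this] show "\<forall>\<^sub>F k in sequentially. 1 - \<eta> \<le> f k / B k \<and> f k / B k \<le> 1 + \<eta>"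
    by (rule eventually_mono) (simp add: B le_divide_eq divide_le_eq)
qed

section \<open>Change of measure\<close>

locale llr_model =
  fixes M :: "'a measure" and N :: nat and P :: "nat \<Rightarrow> 'a measure"
    and F :: "nat \<Rightarrow> 'a measure" and \<mu> :: "nat \<Rightarrow> 'a measure"
    and p :: "nat \<Rightarrow> nat \<Rightarrow> 'a \<Rightarrow> real" and lam :: "nat \<Rightarrow> nat \<Rightarrow> nat \<Rightarrow> 'a \<Rightarrow> real"
  assumes P_prob: "\<And>i. i \<le> N \<Longrightarrow> prob_space (P i)"
    and P_sets: "\<And>i. i \<le> N \<Longrightarrow> sets (P i) = sets M"
    and F_space: "\<And>n. space (F n) = space M"
    and F_sets: "\<And>n. sets (F n) \<subseteq> sets M"
    and \<mu>_sets: "\<And>n. sets (\<mu> n) = sets (F n)"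
    and p_meas: "\<And>i n. i \<le> N \<Longrightarrow> p i n \<in> borel_measurable (F n)"
    and p_nonneg: "\<And>i n \<omega>. i \<le> N \<Longrightarrow> p i n \<omega> \<ge> 0"
    and p_dens: "\<And>i n. i \<le> N \<Longrightarrow>
        restr_to_subalg (P i) (F n) = density (\<mu> n) (\<lambda>\<omega>. ennreal (p i n \<omega>))"
    and mutual_ac: "\<And>i j n. i \<le> N \<Longrightarrow> j \<le> N \<Longrightarrow>
        absolutely_continuous (restr_to_subalg (P i) (F n)) (restr_to_subalg (P j) (F n))"
    and lam_def: "lam = (\<lambda>i j n \<omega>. ln (p i n \<omega> / p j n \<omega>))"
begin

lemma space_P: "i \<le> N \<Longrightarrow> space (P i) = space M"
  using P_sets sets_eq_imp_space_eq by blast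

lemma subalgebra_P_F: "i \<le> N \<Longrightarrow> subalgebra (P i) (F n)"
  unfolding subalgebra_def using F_space F_sets P_sets space_P by auto

lemma sets_F_in_P: "i \<le> N \<Longrightarrow> A \<in> sets (F n) \<Longrightarrow> A \<in> sets (P i)"
  using F_sets P_sets by auto

lemma lam_measurable: "i \<le> N \<Longrightarrow> j \<le> N \<Longrightarrow> lam i j n \<in> borel_measurable (F n)"
  using p_meas[of i n] p_meas[of j n] unfolding lam_def by measurable

lemma llr_pred_in_F:
  assumes "i \<le> N" "j \<le> N" "Measurable.pred borel Q"
  shows "{\<omega> \<in> space M. Q (lam i j n \<omega>)} \<in> sets (F n)"
proof -
  have [measurable]: "lam i j n \<in> borel_measurable (F n)" "Measurable.pred borel Q"
    using lam_measurable assms by auto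
  have "{\<omega> \<in> space (F n). Q (lam i j n \<omega>)} \<in> sets (F n)" by measurable
  then show ?thesis by (simp add: F_space)
qed

lemma p_measurable_\<mu>: "i \<le> N \<Longrightarrow> p i n \<in> borel_measurable (\<mu> n)"
  by (subst measurable_cong_sets[OF \<mu>_sets refl]) (rule p_meas)

lemma emeasure_P_density:
  assumes "i \<le> N" "A \<in> sets (F n)"
  shows "emeasure (P i) A = (\<integral>\<^sup>+ \<omega>. ennreal (p i n \<omega>) * indicator A \<omega> \<partial>\<mu> n)"
proof -
  have "emeasure (P i) A = emeasure (restr_to_subalg (P i) (F n)) A"
    using emeasure_restr_to_subalg[OF subalgebra_P_F[OF assms(1)] assms(2)] by simp
  also have "\<dots> = (\<integral>\<^sup>+ \<omega>. ennreal (p i n \<omega>) * indicator A \<omega> \<partial>\<mu> n)"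
    unfolding p_dens[OF assms(1)] using p_measurable_\<mu>[OF assms(1)] \<mu>_sets assms(2)
    by (intro emeasure_density) auto
  finally show ?thesis .
qed

lemma emeasure_eq_0_if_density_zero:
  assumes i: "i \<le> N" and j: "j \<le> N" and Z: "Z \<in> sets (F n)" and zero: "\<And>\<omega>. \<omega> \<in> Z \<Longrightarrow> p j n \<omega> = 0"
  shows "emeasure (P i) Z = 0"
proof -
  have "emeasure (P j) Z = (\<integral>\<^sup>+ \<omega>. ennreal (p j n \<omega>) * indicator Z \<omega> \<partial>\<mu> n)"
    by (rule emeasure_P_density[OF j Z])
  also have "\<dots> = (\<integral>\<^sup>+ \<omega>. 0 \<partial>\<mu> n)"
    using zero by (intro nn_integral_cong) (auto simp: indicator_def)
  finally have "emeasure (P j) Z = 0" by simp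
  then have "Z \<in> null_sets (restr_to_subalg (P j) (F n))"
    using null_sets_restr_to_subalg[OF subalgebra_P_F[OF j]] Z sets_F_in_P[OF j Z]
    by (auto intro!: null_setsI)
  then have "Z \<in> null_sets (restr_to_subalg (P i) (F n))"
    using mutual_ac[OF j i] unfolding absolutely_continuous_def by auto
  then show ?thesis
    using null_sets_restr_to_subalg[OF subalgebra_P_F[OF i]] by auto
qed

text \<open>Where \<open>p j n = 0\<close> the LLR is the junk value \<open>ln 0 = 0\<close>; that set is \<open>P j\<close>-null, hence
  \<open>P i\<close>-null by mutual absolute continuity, and elsewhere \<open>p i n \<le> exp b * p j n\<close>.\<close>
lemma emeasure_llr_less_le:
  assumes i: "i \<le> N" and j: "j \<le> N" and A: "A \<in> sets (F n)"
  shows "emeasure (P i) (A \<inter> {\<omega> \<in> space M. lam i j n \<omega> < b}) \<le> ennreal (exp b) * emeasure (P j) A"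
proof -
  define E where "E = A \<inter> {\<omega> \<in> space M. lam i j n \<omega> < b}"
  define Z where "Z = E \<inter> {\<omega> \<in> space M. p j n \<omega> = 0}"
  have [measurable]: "p j n \<in> borel_measurable (F n)" by (rule p_meas[OF j])
  have E: "E \<in> sets (F n)"
    unfolding E_def using A llr_pred_in_F[OF i j, of "\<lambda>x. x < b"] by measurable
  have "{\<omega> \<in> space (F n). p j n \<omega> = 0} \<in> sets (F n)" by measurable
  then have Z: "Z \<in> sets (F n)" using E by (auto simp: Z_def F_space)
  have EZ: "E - Z \<in> sets (F n)" using E Z by auto
  have dens_le: "ennreal (p i n \<omega>) * indicator (E - Z) \<omega> \<le>
      ennreal (exp b) * (ennreal (p j n \<omega>) * indicator (E - Z) \<omega>)" for \<omega>
  proof (cases "\<omega> \<in> E - Z")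
    case True
    then have pj: "p j n \<omega> > 0" and llr: "ln (p i n \<omega> / p j n \<omega>) < b"
      using p_nonneg[OF j] by (auto simp: E_def Z_def lam_def intro: order_le_neq_trans)
    have "p i n \<omega> \<le> exp b * p j n \<omega>"
    proof (cases "p i n \<omega> = 0")
      case False
      then have "0 < p i n \<omega> / p j n \<omega>"
        using pj p_nonneg[OF i] by (simp add: order_le_neq_trans)
      then have "p i n \<omega> / p j n \<omega> = exp (ln (p i n \<omega> / p j n \<omega>))" by simp
      also have "\<dots> < exp b" using llr by simp
      finally have "p i n \<omega> / p j n \<omega> < exp b" .
      then show ?thesis using pj by (simp add: divide_less_eq less_imp_le)
    qed (use pj in simp)
    then show ?thesis using True p_nonneg[OF j] by (simp add: ennreal_mult[symmetric])
  qed simp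
  have "emeasure (P i) Z = 0"
    by (rule emeasure_eq_0_if_density_zero[OF i j Z]) (simp add: Z_def)
  then have "Z \<in> null_sets (P i)" using sets_F_in_P[OF i Z] by (simp add: null_sets_def)
  then have "emeasure (P i) E = emeasure (P i) (E - Z)"
    using sets_F_in_P[OF i E] by (simp add: emeasure_Diff_null_set)
  also have "\<dots> = (\<integral>\<^sup>+ \<omega>. ennreal (p i n \<omega>) * indicator (E - Z) \<omega> \<partial>\<mu> n)"
    by (rule emeasure_P_density[OF i EZ])
  also have "\<dots> \<le> (\<integral>\<^sup>+ \<omega>. ennreal (exp b) * (ennreal (p j n \<omega>) * indicator (E - Z) \<omega>) \<partial>\<mu> n)"
    by (intro nn_integral_mono dens_le)
  also have "\<dots> = ennreal (exp b) * (\<integral>\<^sup>+ \<omega>. ennreal (p j n \<omega>) * indicator (E - Z) \<omega> \<partial>\<mu> n)"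
  proof (rule nn_integral_cmult)
    have [measurable]: "p j n \<in> borel_measurable (\<mu> n)" "E - Z \<in> sets (\<mu> n)"
      using p_measurable_\<mu>[OF j] EZ \<mu>_sets by auto
    show "(\<lambda>\<omega>. ennreal (p j n \<omega>) * indicator (E - Z) \<omega>) \<in> borel_measurable (\<mu> n)" by measurable
  qed
  also have "\<dots> = ennreal (exp b) * emeasure (P j) (E - Z)"
    by (simp add: emeasure_P_density[OF j EZ])
  also have "\<dots> \<le> ennreal (exp b) * emeasure (P j) A"
    using sets_F_in_P[OF j A] by (intro mult_left_mono emeasure_mono) (auto simp: E_def)
  finally show ?thesis unfolding E_def .
qed

text \<open>On \<open>{T \<le> n}\<close> a test either decides wrongly, or accepts \<open>H\<^sub>i\<close> with \<open>\<lambda>\<^sub>i\<^sub>j(n) < b\<close> (an event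
  whose \<open>P i\<close>-probability is at most \<open>exp b\<close> times the error probability \<open>P j(d = i)\<close>),
  or has \<open>\<lambda>\<^sub>i\<^sub>j(n) \<ge> b\<close>.\<close>
lemma prob_stop_le_Csim:
  assumes i: "i \<le> N" and D: "(T, \<delta>) \<in> Csim M F P N \<alpha>" and j: "j \<le> N" "j \<noteq> i"
  shows "measure (P i) {\<omega> \<in> space M. T \<omega> \<le> enat n} \<le>
    (\<Sum>j'\<in>{..N}-{i}. \<alpha> i j') + exp b * \<alpha> j i + measure (P i) {\<omega> \<in> space M. b \<le> lam i j n \<omega>}"
proof -
  interpret Pi: prob_space "P i" using P_prob[OF i] .
  interpret Pj: prob_space "P j" using P_prob[OF j(1)] .
  have dec: "is_FT_decision M F T N \<delta>"
    and err: "\<And>i j. i \<le> N \<Longrightarrow> j \<le> N \<Longrightarrow> i \<noteq> j \<Longrightarrow> measure (P i) {\<omega> \<in> space M. \<delta> \<omega> = j} \<le> \<alpha> i j"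
    using D unfolding Csim_def by auto
  define wrong where "wrong = (\<Union>j'\<in>{..N}-{i}. {\<omega> \<in> space M. \<delta> \<omega> = j'})"
  define acc where "acc = {\<omega> \<in> space M. \<delta> \<omega> = i \<and> T \<omega> \<le> enat n}"
  define low where "low = {\<omega> \<in> space M. lam i j n \<omega> < b}"
  define high where "high = {\<omega> \<in> space M. b \<le> lam i j n \<omega>}"
  have acc: "acc \<in> sets (F n)" using dec unfolding is_FT_decision_def acc_def by blast
  have decided: "{\<omega> \<in> space M. \<delta> \<omega> = j'} \<in> sets (P i)" for j'
    using dec P_sets[OF i] unfolding is_FT_decision_def by auto
  have low: "low \<in> sets (F n)"
    unfolding low_def by (rule llr_pred_in_F[OF i j(1)]) measurable
  have high: "high \<in> sets (F n)"
    unfolding high_def by (rule llr_pred_in_F[OF i j(1)]) measurable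
  have sets: "wrong \<in> sets (P i)" "acc \<inter> low \<in> sets (P i)" "high \<in> sets (P i)"
    using decided sets_F_in_P[OF i] sets.Int[OF acc low] high unfolding wrong_def by blast+
  have "{\<omega> \<in> space M. T \<omega> \<le> enat n} \<subseteq> wrong \<union> (acc \<inter> low) \<union> high"
  proof
    fix \<omega> assume \<omega>: "\<omega> \<in> {\<omega> \<in> space M. T \<omega> \<le> enat n}"
    then have "\<delta> \<omega> \<le> N" using dec unfolding is_FT_decision_def by auto
    with \<omega> show "\<omega> \<in> wrong \<union> (acc \<inter> low) \<union> high"
      unfolding wrong_def acc_def low_def high_def by (cases "\<delta> \<omega> = i") auto
  qed
  then have "measure (P i) {\<omega> \<in> space M. T \<omega> \<le> enat n} \<le> measure (P i) (wrong \<union> (acc \<inter> low) \<union> high)"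
    using sets by (intro Pi.finite_measure_mono) auto
  also have "\<dots> \<le> measure (P i) (wrong \<union> (acc \<inter> low)) + measure (P i) high"
    using sets by (intro measure_subadditive Pi.emeasure_finite) auto
  also have "measure (P i) (wrong \<union> (acc \<inter> low)) \<le> measure (P i) wrong + measure (P i) (acc \<inter> low)"
    using sets by (intro measure_subadditive Pi.emeasure_finite) auto
  finally have "measure (P i) {\<omega> \<in> space M. T \<omega> \<le> enat n} \<le>
      measure (P i) wrong + measure (P i) (acc \<inter> low) + measure (P i) high" by simp
  moreover have "measure (P i) wrong \<le> (\<Sum>j'\<in>{..N}-{i}. \<alpha> i j')"
  proof -
    have "measure (P i) wrong \<le> (\<Sum>j'\<in>{..N}-{i}. measure (P i) {\<omega> \<in> space M. \<delta> \<omega> = j'})"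
      unfolding wrong_def using decided by (intro Pi.finite_measure_subadditive_finite) auto
    also have "\<dots> \<le> (\<Sum>j'\<in>{..N}-{i}. \<alpha> i j')"
      using err[OF i] by (intro sum_mono) auto
    finally show ?thesis .
  qed
  moreover have "measure (P i) (acc \<inter> low) \<le> exp b * \<alpha> j i"
  proof -
    have "emeasure (P i) (acc \<inter> low) \<le> ennreal (exp b) * emeasure (P j) acc"
      unfolding low_def by (rule emeasure_llr_less_le[OF i j(1) acc])
    also have "emeasure (P j) acc \<le> emeasure (P j) {\<omega> \<in> space M. \<delta> \<omega> = i}"
      using dec P_sets[OF j(1)] unfolding is_FT_decision_def acc_def by (intro emeasure_mono) auto
    finally have "measure (P i) (acc \<inter> low) \<le> exp b * measure (P j) {\<omega> \<in> space M. \<delta> \<omega> = i}"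
      by (simp add: Pi.emeasure_eq_measure Pj.emeasure_eq_measure mult_left_mono flip: ennreal_mult)
    also have "\<dots> \<le> exp b * \<alpha> j i"
      using err[OF j(1) i] j(2) by simp
    finally show ?thesis .
  qed
  ultimately show ?thesis unfolding high_def by linarith
qed

end

section \<open>Asymptotic optimality\<close>

text \<open>The index \<open>k\<close> runs along the family of error bounds \<open>\<alpha> k\<close> with \<open>\<alpha>max k \<longlonglongrightarrow> 0\<close>;
  \<open>a k\<close> and \<open>d k\<close> are the corresponding MSPRT thresholds and decision rule.\<close>
locale msprt_asymptotics = llr_model M N P F \<mu> p lam
  for M :: "'a measure" and N P F \<mu> p lam +
  fixes \<psi> \<Psi> L :: "real \<Rightarrow> real" and I :: "nat \<Rightarrow> nat \<Rightarrow> real" and r :: real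
    and \<alpha> :: "nat \<Rightarrow> nat \<Rightarrow> nat \<Rightarrow> real" and \<alpha>max :: "nat \<Rightarrow> real"
    and a :: "nat \<Rightarrow> nat \<Rightarrow> nat \<Rightarrow> real" and d :: "nat \<Rightarrow> 'a \<Rightarrow> nat"
  assumes N_ge: "N \<ge> 1"
    and \<psi>_mono: "strict_mono_on {0<..} \<psi>"
    and \<psi>_bij: "bij_betw \<psi> {0<..} {0<..}"
    and \<Psi>_def: "\<Psi> = the_inv_into {0<..} \<psi>"
    and \<Psi>_inf: "filterlim \<Psi> at_top at_top"
    and \<Psi>_reg_inner: "\<forall>\<^sub>F \<delta> in at 1. ((\<lambda>t. \<Psi> (\<delta> * t) / \<Psi> t) \<longlongrightarrow> L \<delta>) at_top"
    and \<Psi>_reg_outer: "(L \<longlongrightarrow> 1) (at 1)"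
    and I_pos: "\<And>i j. i \<le> N \<Longrightarrow> j \<le> N \<Longrightarrow> i \<noteq> j \<Longrightarrow> I i j > 0"
    and r_ge: "r \<ge> 1"
    and r_complete: "\<And>i j \<epsilon>. i \<le> N \<Longrightarrow> j \<le> N \<Longrightarrow> i \<noteq> j \<Longrightarrow> \<epsilon> > 0 \<Longrightarrow>
        summable (\<lambda>t. real (Suc t) powr (r - 1) *
          measure (P i) {\<omega> \<in> space M. \<bar>lam i j (Suc t) \<omega> / \<psi> (real (Suc t)) - I i j\<bar> > \<epsilon>})"
    and \<alpha>_range: "\<And>k i j. i \<le> N \<Longrightarrow> j \<le> N \<Longrightarrow> i \<noteq> j \<Longrightarrow> 0 < \<alpha> k i j \<and> \<alpha> k i j < 1"
    and \<alpha>max_def: "\<alpha>max = (\<lambda>k. Max {\<alpha> k i j | i j. i \<le> N \<and> j \<le> N \<and> i \<noteq> j})"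
    and \<alpha>max_lim: "\<alpha>max \<longlonglongrightarrow> 0"
    and a_asymp: "\<And>i j. i \<le> N \<Longrightarrow> j \<le> N \<Longrightarrow> i \<noteq> j \<Longrightarrow>
        (\<lambda>k. a k j i / ln (1 / \<alpha> k j i)) \<longlonglongrightarrow> 1"
    and d_msprt: "\<And>k. msprt_decision M F N lam (a k) (d k)"
    and msprt_err: "\<And>k i j. i \<le> N \<Longrightarrow> j \<le> N \<Longrightarrow> i \<noteq> j \<Longrightarrow>
        measure (P i) {\<omega> \<in> space M. d k \<omega> = j} \<le> \<alpha> k i j"
begin

lemma psi_pos: "t > 0 \<Longrightarrow> \<psi> t > 0"
  using \<psi>_bij unfolding bij_betw_def by auto

lemma Psi_pos: "x > 0 \<Longrightarrow> \<Psi> x > 0"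
  using \<psi>_bij unfolding \<Psi>_def by (metis bij_betw_def greaterThan_iff order_refl the_inv_into_into)

lemma psi_Psi: "x > 0 \<Longrightarrow> \<psi> (\<Psi> x) = x"
  using \<psi>_bij unfolding \<Psi>_def by (simp add: f_the_inv_into_f_bij_betw)

lemma le_Psi_iff: "t > 0 \<Longrightarrow> x > 0 \<Longrightarrow> t \<le> \<Psi> x \<longleftrightarrow> \<psi> t \<le> x"
  using \<psi>_mono Psi_pos[of x] psi_Psi[of x] by (metis greaterThan_iff strict_mono_on_less_eq)

lemma le_psi_if_Psi_le:
  assumes "x > 0" "\<Psi> x \<le> t"
  shows "x \<le> \<psi> t"
proof -
  have "\<psi> (\<Psi> x) \<le> \<psi> t"
    using Psi_pos[OF assms(1)] assms(2) by (intro strict_mono_on_leD[OF \<psi>_mono]) auto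
  then show ?thesis using psi_Psi[OF assms(1)] by simp
qed

lemma Psi_mono: "0 < x \<Longrightarrow> x \<le> y \<Longrightarrow> \<Psi> x \<le> \<Psi> y"
  using le_Psi_iff[of "\<Psi> x" y] Psi_pos psi_Psi by auto

definition dev :: "nat \<Rightarrow> nat \<Rightarrow> real \<Rightarrow> nat \<Rightarrow> 'a set" where
  "dev i j \<epsilon> m = {\<omega> \<in> space M. \<epsilon> < \<bar>lam i j m \<omega> / \<psi> (real m) - I i j\<bar>}"

lemma dev_in_P:
  assumes "i \<le> N" "j \<le> N"
  shows "dev i j \<epsilon> m \<in> sets (P i)"
proof -
  have "dev i j \<epsilon> m \<in> sets (F m)"
    unfolding dev_def by (rule llr_pred_in_F[OF assms]) measurable
  then show ?thesis using sets_F_in_P[OF assms(1)] by blast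
qed

lemma summable_dev:
  "i \<le> N \<Longrightarrow> j \<le> N \<Longrightarrow> i \<noteq> j \<Longrightarrow> \<epsilon> > 0 \<Longrightarrow>
    summable (\<lambda>t. real (Suc t) powr (r - 1) * measure (P i) (dev i j \<epsilon> (Suc t)))"
  using r_complete unfolding dev_def by simp

lemma measure_dev_tendsto_0:
  assumes "i \<le> N" "j \<le> N" "i \<noteq> j" "\<epsilon> > 0"
  shows "(\<lambda>m. measure (P i) (dev i j \<epsilon> m)) \<longlonglongrightarrow> 0"
proof (rule LIMSEQ_imp_Suc)
  have "measure (P i) (dev i j \<epsilon> (Suc t)) \<le> real (Suc t) powr (r - 1) * measure (P i) (dev i j \<epsilon> (Suc t))" for t
  proof -
    have "1 \<le> real (Suc t) powr (r - 1)" using r_ge by (intro ge_one_powr_ge_zero) auto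
    then show ?thesis using mult_right_mono[of 1 _ "measure (P i) (dev i j \<epsilon> (Suc t))"] by simp
  qed
  then show "(\<lambda>t. measure (P i) (dev i j \<epsilon> (Suc t))) \<longlonglongrightarrow> 0"
    by (intro tendsto_sandwich[OF _ _ tendsto_const summable_LIMSEQ_zero[OF summable_dev[OF assms]]])
      auto
qed

lemma alpha_le_max: "i \<le> N \<Longrightarrow> j \<le> N \<Longrightarrow> i \<noteq> j \<Longrightarrow> \<alpha> k i j \<le> \<alpha>max k"
proof -
  assume ij: "i \<le> N" "j \<le> N" "i \<noteq> j"
  have "{\<alpha> k i j | i j. i \<le> N \<and> j \<le> N \<and> i \<noteq> j} \<subseteq> (\<lambda>(i, j). \<alpha> k i j) ` ({..N} \<times> {..N})"
    by force
  then have "finite {\<alpha> k i j | i j. i \<le> N \<and> j \<le> N \<and> i \<noteq> j}"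
    by (rule finite_subset) simp
  then show ?thesis unfolding \<alpha>max_def by (rule Max_ge) (use ij in blast)
qed

lemma alpha_tendsto_0: "i \<le> N \<Longrightarrow> j \<le> N \<Longrightarrow> i \<noteq> j \<Longrightarrow> (\<lambda>k. \<alpha> k i j) \<longlonglongrightarrow> 0"
  using \<alpha>_range alpha_le_max
  by (intro tendsto_sandwich[OF _ _ tendsto_const \<alpha>max_lim] always_eventually) (auto simp: less_imp_le)

lemma abs_ln_alpha_at_top:
  assumes "i \<le> N" "j \<le> N" "i \<noteq> j"
  shows "filterlim (\<lambda>k. \<bar>ln (\<alpha> k i j)\<bar>) at_top sequentially"
proof -
  have "filterlim (\<lambda>k. \<alpha> k i j) (at_right 0) sequentially"
    using alpha_tendsto_0[OF assms] \<alpha>_range[OF assms] by (intro tendsto_imp_filterlim_at_right) auto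
  then have "filterlim (\<lambda>k. ln (\<alpha> k i j)) at_bot sequentially"
    by (rule filterlim_compose[OF ln_at_0])
  moreover have "\<bar>ln (\<alpha> k i j)\<bar> = - ln (\<alpha> k i j)" for k
    using \<alpha>_range[OF assms, of k] by simp
  ultimately show ?thesis by (simp add: filterlim_uminus_at_top)
qed

definition level :: "nat \<Rightarrow> nat \<Rightarrow> real" where
  "level i k = Max ((\<lambda>j. \<bar>ln (\<alpha> k j i)\<bar> / I i j) ` ({..N} - {i}))"

lemma exists_other_index: "\<exists>j\<le>N. j \<noteq> i"
  using N_ge by (cases "i = 0") auto

lemma level_ge: "j \<le> N \<Longrightarrow> j \<noteq> i \<Longrightarrow> \<bar>ln (\<alpha> k j i)\<bar> / I i j \<le> level i k"
  unfolding level_def by (intro Max_ge) auto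

lemma level_attained: "\<exists>j\<le>N. j \<noteq> i \<and> level i k = \<bar>ln (\<alpha> k j i)\<bar> / I i j"
proof -
  have "level i k \<in> (\<lambda>j. \<bar>ln (\<alpha> k j i)\<bar> / I i j) ` ({..N} - {i})"
    unfolding level_def using exists_other_index[of i] by (intro Max_in) auto
  then show ?thesis by auto
qed

lemma level_pos:
  assumes i: "i \<le> N"
  shows "level i k > 0"
proof -
  obtain j where j: "j \<le> N" "j \<noteq> i" using exists_other_index by blast
  have "ln (\<alpha> k j i) < 0" using \<alpha>_range[OF j(1) i j(2)] by simp
  then have "0 < \<bar>ln (\<alpha> k j i)\<bar> / I i j" using I_pos[OF i j(1) j(2)[symmetric]] by (simp add: divide_neg_pos)
  then show ?thesis using level_ge[OF j, of k] by linarith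
qed

lemma level_at_top:
  assumes i: "i \<le> N"
  shows "filterlim (level i) at_top sequentially"
proof -
  obtain j where j: "j \<le> N" "j \<noteq> i" using exists_other_index by blast
  have "filterlim (\<lambda>k. (1 / I i j) * \<bar>ln (\<alpha> k j i)\<bar>) at_top sequentially"
    using I_pos[OF i j(1) j(2)[symmetric]] abs_ln_alpha_at_top[OF j(1) i j(2)]
    by (intro filterlim_tendsto_pos_mult_at_top[OF tendsto_const]) auto
  then show ?thesis
    by (rule filterlim_at_top_mono) (use level_ge[OF j] in auto)
qed

lemma Psi_level_at_top:
  "i \<le> N \<Longrightarrow> c > 0 \<Longrightarrow> filterlim (\<lambda>k. \<Psi> (c * level i k)) at_top sequentially"
  by (rule filterlim_compose[OF \<Psi>_inf])
    (intro filterlim_tendsto_pos_mult_at_top[OF tendsto_const] level_at_top)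

lemma eventually_threshold_le:
  assumes i: "i \<le> N" and e: "e > 0"
  shows "\<forall>\<^sub>F k in sequentially. \<forall>j\<in>{..N}-{i}. a k j i \<le> (1 + e) * I i j * level i k"
proof (rule eventually_ball_finite)
  show "\<forall>j\<in>{..N}-{i}. \<forall>\<^sub>F k in sequentially. a k j i \<le> (1 + e) * I i j * level i k"
  proof
    fix j assume "j \<in> {..N}-{i}"
    then have j: "j \<le> N" "j \<noteq> i" by auto
    have "\<forall>\<^sub>F k in sequentially. a k j i / ln (1 / \<alpha> k j i) < 1 + e"
      using e by (intro order_tendstoD(2)[OF a_asymp[OF i j(1) j(2)[symmetric]]]) simp
    then show "\<forall>\<^sub>F k in sequentially. a k j i \<le> (1 + e) * I i j * level i k"
    proof eventually_elim
      case (elim k)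
      have \<alpha>: "0 < \<alpha> k j i" "\<alpha> k j i < 1" using \<alpha>_range[OF j(1) i j(2)] by auto
      then have ln: "ln (1 / \<alpha> k j i) = \<bar>ln (\<alpha> k j i)\<bar>" "\<bar>ln (\<alpha> k j i)\<bar> > 0"
        by (simp_all add: ln_div)
      have "a k j i \<le> (1 + e) * \<bar>ln (\<alpha> k j i)\<bar>"
        using elim ln by (simp add: pos_divide_less_eq less_imp_le)
      also have "\<bar>ln (\<alpha> k j i)\<bar> \<le> I i j * level i k"
        using level_ge[OF j, of k] I_pos[OF i j(1) j(2)[symmetric]] by (simp add: divide_le_eq mult.commute)
      then have "(1 + e) * \<bar>ln (\<alpha> k j i)\<bar> \<le> (1 + e) * (I i j * level i k)"
        using e by (intro mult_left_mono) auto
      finally show ?case by (simp add: mult.assoc)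
    qed
  qed
qed simp

lemma llr_below_threshold_in_dev:
  assumes "j \<le> N" "j \<noteq> i" "\<omega> \<in> space M" "0 < \<psi> (real n)"
    and "lam i j n \<omega> < c" "c \<le> (1 - e) * I i j * \<psi> (real n)"
  shows "\<omega> \<in> dev i j (e * I i j) n"
proof -
  have "lam i j n \<omega> / \<psi> (real n) < (1 - e) * I i j"
    using assms(4-6) by (simp add: divide_less_eq)
  then show ?thesis using assms(3) by (simp add: dev_def algebra_simps)
qed

text \<open>Before \<open>T\<^sub>*\<close> some LLR is below its threshold, hence deviates from its drift; the constant
  \<open>K\<close> comes from r-complete convergence and does not depend on the thresholds.\<close>
lemma mom_msprt_le:
  assumes i: "i \<le> N" and e: "0 < e"
  obtains K where "0 \<le> K"
    "\<And>k n0. 1 \<le> n0 \<Longrightarrow>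
      (\<And>n j. n0 \<le> n \<Longrightarrow> j \<le> N \<Longrightarrow> j \<noteq> i \<Longrightarrow> a k j i \<le> (1 - e) * I i j * \<psi> (real n)) \<Longrightarrow>
      mom (P i) r (msprt_T N lam (a k)) \<le> ennreal (real n0 powr r + K)"
proof -
  interpret Pi: prob_space "P i" using P_prob[OF i] .
  define B where "B m = (\<Union>j\<in>{..N}-{i}. dev i j (e * I i j) m)" for m
  define w where "w t = real (Suc t) powr (r - 1)" for t
  have B_sets: "B m \<in> sets (P i)" for m
    unfolding B_def using dev_in_P[OF i] by auto
  have sg: "summable (\<lambda>t. \<Sum>j\<in>{..N}-{i}. w t * measure (P i) (dev i j (e * I i j) (Suc t)))"
    using summable_dev[OF i] I_pos[OF i] e unfolding w_def by (intro summable_sum) auto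
  have le: "w t * measure (P i) (B (Suc t)) \<le> (\<Sum>j\<in>{..N}-{i}. w t * measure (P i) (dev i j (e * I i j) (Suc t)))"
    for t
  proof -
    have "measure (P i) (B (Suc t)) \<le> (\<Sum>j\<in>{..N}-{i}. measure (P i) (dev i j (e * I i j) (Suc t)))"
      unfolding B_def using dev_in_P[OF i] by (intro Pi.finite_measure_subadditive_finite) auto
    then have "w t * measure (P i) (B (Suc t)) \<le> w t * (\<Sum>j\<in>{..N}-{i}. measure (P i) (dev i j (e * I i j) (Suc t)))"
      by (rule mult_left_mono) (simp add: w_def)
    then show ?thesis by (simp add: sum_distrib_left)
  qed
  have summable: "summable (\<lambda>t. w t * measure (P i) (B (Suc t)))"
    by (rule summable_comparison_test'[OF sg]) (use le in \<open>simp add: w_def\<close>)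
  define K where "K = r * 2 powr (r - 1) * (\<Sum>t. w t * measure (P i) (B (Suc t)))"
  show thesis
  proof (rule that)
    have "0 \<le> (\<Sum>t. w t * measure (P i) (B (Suc t)))"
      using summable by (rule suminf_nonneg) (simp add: w_def)
    then show "0 \<le> K" unfolding K_def using r_ge by simp
  next
    fix k n0 :: nat
    assume n0: "1 \<le> n0"
      and thr: "\<And>n j. n0 \<le> n \<Longrightarrow> j \<le> N \<Longrightarrow> j \<noteq> i \<Longrightarrow> a k j i \<le> (1 - e) * I i j * \<psi> (real n)"
    have "\<omega> \<in> B n" if \<omega>: "\<omega> \<in> space (P i)" and n: "n0 \<le> n" "enat n < msprt_T N lam (a k) \<omega>" for \<omega> n
    proof -
      have "enat n < msprt_Ti N lam (a k) i \<omega>"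
        using n(2) msprt_T_le_Ti[OF i] by (rule less_le_trans)
      then obtain j where "j \<le> N" "j \<noteq> i" "lam i j n \<omega> < a k j i"
        using not_stopped_before_msprt_Ti n0 n(1) by (metis le_trans)
      then have "\<omega> \<in> dev i j (e * I i j) n"
        using \<omega> space_P[OF i] psi_pos[of "real n"] n0 n(1) thr[OF n(1)]
        by (intro llr_below_threshold_in_dev) auto
      then show ?thesis using \<open>j \<le> N\<close> \<open>j \<noteq> i\<close> by (auto simp: B_def)
    qed
    then show "mom (P i) r (msprt_T N lam (a k)) \<le> ennreal (real n0 powr r + K)"
      unfolding K_def using mom_le_tail_sum[OF P_prob[OF i] r_ge n0 B_sets _ summable[unfolded w_def]]
      by (simp add: w_def)
  qed
qed

lemma ratio_Psi_level_tendsto: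
  "i \<le> N \<Longrightarrow> ((\<lambda>t. \<Psi> (\<delta> * t) / \<Psi> t) \<longlongrightarrow> l) at_top \<Longrightarrow>
    (\<lambda>k. \<Psi> (\<delta> * level i k) / \<Psi> (level i k)) \<longlonglongrightarrow> l"
  by (rule filterlim_compose[OF _ level_at_top])

lemma inverse_Psi_level_tendsto_0: "i \<le> N \<Longrightarrow> (\<lambda>k. 1 / \<Psi> (level i k)) \<longlonglongrightarrow> 0"
  using Psi_level_at_top[of i 1] by (simp add: tendsto_inverse_0_at_top flip: inverse_eq_divide)

lemma eventually_mom_msprt_le_Psi:
  assumes i: "i \<le> N" and \<delta>: "\<delta> > 1"
  obtains K where "\<forall>\<^sub>F k in sequentially.
    mom (P i) r (msprt_T N lam (a k)) \<le> ennreal ((\<Psi> (\<delta> * level i k) + 1) powr r + K)"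
proof -
  define e where "e = (\<delta> - 1) / (\<delta> + 1)"
  have e: "0 < e" "1 + e = (1 - e) * \<delta>" "e < 1" using \<delta> by (auto simp: e_def field_simps)
  obtain K where K: "0 \<le> K" and mom_le: "\<And>k n0. 1 \<le> n0 \<Longrightarrow>
      (\<And>n j. n0 \<le> n \<Longrightarrow> j \<le> N \<Longrightarrow> j \<noteq> i \<Longrightarrow> a k j i \<le> (1 - e) * I i j * \<psi> (real n)) \<Longrightarrow>
      mom (P i) r (msprt_T N lam (a k)) \<le> ennreal (real n0 powr r + K)"
    using mom_msprt_le[OF i e(1)] by blast
  have "\<forall>\<^sub>F k in sequentially. mom (P i) r (msprt_T N lam (a k)) \<le> ennreal ((\<Psi> (\<delta> * level i k) + 1) powr r + K)"
    using eventually_threshold_le[OF i e(1)]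
  proof eventually_elim
    case (elim k)
    define y where "y = \<Psi> (\<delta> * level i k)"
    have \<delta>X: "0 < \<delta> * level i k" using \<delta> level_pos[OF i] by simp
    then have y: "0 < y" unfolding y_def by (rule Psi_pos)
    define n0 where "n0 = nat \<lceil>y\<rceil>"
    have n0: "1 \<le> n0" "y \<le> real n0" "real n0 \<le> y + 1" using y unfolding n0_def by linarith+
    have "a k j i \<le> (1 - e) * I i j * \<psi> (real n)" if "n0 \<le> n" "j \<le> N" "j \<noteq> i" for n j
    proof -
      have "\<delta> * level i k \<le> \<psi> (real n)"
        using n0(2) that(1) by (intro le_psi_if_Psi_le[OF \<delta>X]) (simp add: y_def)
      then have "(1 - e) * I i j * (\<delta> * level i k) \<le> (1 - e) * I i j * \<psi> (real n)"
        using e(3) I_pos[OF i that(2) that(3)[symmetric]] by (intro mult_left_mono) auto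
      moreover have "(1 + e) * I i j * level i k = (1 - e) * I i j * (\<delta> * level i k)"
        by (subst e(2)) (simp add: ac_simps)
      moreover have "a k j i \<le> (1 + e) * I i j * level i k" using elim that(2,3) by blast
      ultimately show ?thesis by linarith
    qed
    then have "mom (P i) r (msprt_T N lam (a k)) \<le> ennreal (real n0 powr r + K)"
      by (rule mom_le[OF n0(1)])
    also have "\<dots> \<le> ennreal ((y + 1) powr r + K)"
      using n0 r_ge by (intro ennreal_leI add_right_mono powr_mono2) auto
    finally show ?case unfolding y_def .
  qed
  then show thesis by (rule that)
qed

lemma ratio_limit_ge_one:
  assumes \<delta>: "1 \<le> \<delta>" and reg: "((\<lambda>t. \<Psi> (\<delta> * t) / \<Psi> t) \<longlongrightarrow> l) at_top"
  shows "1 \<le> l"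
proof (rule tendsto_lowerbound[OF reg])
  show "\<forall>\<^sub>F t in at_top. 1 \<le> \<Psi> (\<delta> * t) / \<Psi> t"
    using eventually_gt_at_top[of "0::real"]
  proof eventually_elim
    case (elim t)
    have "\<Psi> t \<le> \<Psi> (\<delta> * t)" using elim \<delta> by (intro Psi_mono) auto
    then show ?case using Psi_pos[OF elim] by simp
  qed
qed simp

lemma shifted_Psi_ratio_tendsto:
  assumes i: "i \<le> N" and \<delta>: "0 < \<delta>" and reg: "((\<lambda>t. \<Psi> (\<delta> * t) / \<Psi> t) \<longlongrightarrow> l) at_top" and "l \<noteq> 0"
  shows "(\<lambda>k. ((\<Psi> (\<delta> * level i k) + 1) powr r + K) / \<Psi> (level i k) powr r) \<longlonglongrightarrow> l powr r"
proof -
  have eq: "((\<Psi> (\<delta> * level i k) + 1) powr r + K) / \<Psi> (level i k) powr r =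
      (\<Psi> (\<delta> * level i k) / \<Psi> (level i k) + 1 / \<Psi> (level i k)) powr r + K * (1 / \<Psi> (level i k)) powr r"
    for k
  proof -
    have pos: "0 < \<Psi> (level i k)" "0 < \<Psi> (\<delta> * level i k)"
      using Psi_pos level_pos[OF i] \<delta> by simp_all
    have "((\<Psi> (\<delta> * level i k) + 1) powr r + K) / \<Psi> (level i k) powr r =
        (\<Psi> (\<delta> * level i k) + 1) powr r / \<Psi> (level i k) powr r + K / \<Psi> (level i k) powr r"
      by (rule add_divide_distrib)
    also have "(\<Psi> (\<delta> * level i k) + 1) powr r / \<Psi> (level i k) powr r =
        ((\<Psi> (\<delta> * level i k) + 1) / \<Psi> (level i k)) powr r"
      using pos by (simp add: powr_divide)
    also have "K / \<Psi> (level i k) powr r = K * (1 / \<Psi> (level i k)) powr r"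
      using pos by (simp add: powr_divide)
    finally show ?thesis by (simp add: add_divide_distrib)
  qed
  have "(\<lambda>k. (\<Psi> (\<delta> * level i k) / \<Psi> (level i k) + 1 / \<Psi> (level i k)) powr r) \<longlonglongrightarrow> (l + 0) powr r"
    using \<open>l \<noteq> 0\<close>
    by (intro tendsto_powr tendsto_add ratio_Psi_level_tendsto[OF i reg] inverse_Psi_level_tendsto_0[OF i]
        tendsto_const) auto
  moreover have "(\<lambda>k. (1 / \<Psi> (level i k)) powr r) \<longlonglongrightarrow> 0"
    using Psi_pos[OF level_pos[OF i]] r_ge
    by (intro tendsto_zero_powrI[OF inverse_Psi_level_tendsto_0[OF i] tendsto_const])
      (auto intro!: always_eventually less_imp_le)
  ultimately have "(\<lambda>k. (\<Psi> (\<delta> * level i k) / \<Psi> (level i k) + 1 / \<Psi> (level i k)) powr r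
      + K * (1 / \<Psi> (level i k)) powr r) \<longlonglongrightarrow> (l + 0) powr r + K * 0"
    by (intro tendsto_add tendsto_mult tendsto_const)
  then show ?thesis unfolding eq by simp
qed

lemma eventually_mom_msprt_le:
  assumes i: "i \<le> N" and \<eta>: "\<eta> > 0"
  shows "\<forall>\<^sub>F k in sequentially. mom (P i) r (msprt_T N lam (a k)) \<le> ennreal ((1 + \<eta>) * \<Psi> (level i k) powr r)"
proof -
  obtain \<delta> where \<delta>: "1 < \<delta>" and reg: "((\<lambda>t. \<Psi> (\<delta> * t) / \<Psi> t) \<longlongrightarrow> L \<delta>) at_top"
    and L\<delta>: "L \<delta> powr r < 1 + \<eta>"
    using regular_ratio_above_one[OF \<Psi>_reg_inner \<Psi>_reg_outer \<eta>] by blast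
  have "L \<delta> \<noteq> 0" using ratio_limit_ge_one[OF _ reg] \<delta> by auto
  obtain K where mom_le: "\<forall>\<^sub>F k in sequentially.
      mom (P i) r (msprt_T N lam (a k)) \<le> ennreal ((\<Psi> (\<delta> * level i k) + 1) powr r + K)"
    using eventually_mom_msprt_le_Psi[OF i \<delta>] by blast
  have "\<forall>\<^sub>F k in sequentially. ((\<Psi> (\<delta> * level i k) + 1) powr r + K) / \<Psi> (level i k) powr r < 1 + \<eta>"
    using shifted_Psi_ratio_tendsto[OF i _ reg \<open>L \<delta> \<noteq> 0\<close>] \<delta> L\<delta> by (intro order_tendstoD(2)) auto
  with mom_le show ?thesis
  proof eventually_elim
    case (elim k)
    have "0 < \<Psi> (level i k) powr r" using Psi_pos[OF level_pos[OF i, of k]] by simp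
    then have "(\<Psi> (\<delta> * level i k) + 1) powr r + K \<le> (1 + \<eta>) * \<Psi> (level i k) powr r"
      using elim(2) by (simp add: divide_less_eq)
    with elim(1) show ?case by (auto intro: order_trans ennreal_leI)
  qed
qed

definition early_stop_bound :: "nat \<Rightarrow> nat \<Rightarrow> real \<Rightarrow> real \<Rightarrow> nat \<Rightarrow> real" where
  "early_stop_bound i k \<delta> \<theta> n = (\<Sum>j\<in>{..N}-{i}. \<alpha> k i j) + (\<Sum>j\<in>{..N}-{i}. \<alpha> k j i powr (1 - \<theta>)) +
    (\<Sum>j\<in>{..N}-{i}. measure (P i) (dev i j (I i j * (\<theta> / \<delta> - 1) / 2) n))"

text \<open>Apply \<open>prob_stop_le_Csim\<close> to the alternative \<open>j\<close> attaining \<open>level i k\<close> with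
  \<open>b = \<theta> |ln \<alpha>\<^sub>j\<^sub>i|\<close>: then \<open>exp b * \<alpha>\<^sub>j\<^sub>i = \<alpha>\<^sub>j\<^sub>i powr (1 - \<theta>)\<close>, and \<open>\<lambda>\<^sub>i\<^sub>j(n) \<ge> b\<close> forces a deviation
  since \<open>\<psi>(n) \<le> \<delta> level i k\<close> with \<open>\<delta> < \<theta>\<close>.\<close>
lemma prob_early_stop_le:
  assumes i: "i \<le> N" and D: "(T, \<delta>') \<in> Csim M F P N (\<alpha> k)" and \<delta>\<theta>: "0 < \<delta>" "\<delta> < \<theta>"
    and n: "1 \<le> n" "\<psi> (real n) \<le> \<delta> * level i k"
  shows "measure (P i) {\<omega> \<in> space M. T \<omega> \<le> enat n} \<le> early_stop_bound i k \<delta> \<theta> n"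
proof -
  interpret Pi: prob_space "P i" using P_prob[OF i] .
  obtain j where j: "j \<le> N" "j \<noteq> i" and lvl: "level i k = \<bar>ln (\<alpha> k j i)\<bar> / I i j"
    using level_attained by blast
  have I: "0 < I i j" using I_pos[OF i j(1) j(2)[symmetric]] .
  have \<alpha>: "0 < \<alpha> k j i" "\<alpha> k j i < 1" using \<alpha>_range[OF j(1) i j(2)] by auto
  define b where "b = \<theta> * \<bar>ln (\<alpha> k j i)\<bar>"
  have "exp b * \<alpha> k j i = exp ((1 - \<theta>) * ln (\<alpha> k j i))"
    using \<alpha> by (simp add: b_def algebra_simps exp_add exp_diff exp_minus field_simps)
  also have "\<dots> = \<alpha> k j i powr (1 - \<theta>)" using \<alpha> by (simp add: powr_def)
  finally have exp_b: "exp b * \<alpha> k j i = \<alpha> k j i powr (1 - \<theta>)" .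
  have high: "{\<omega> \<in> space M. b \<le> lam i j n \<omega>} \<subseteq> dev i j (I i j * (\<theta> / \<delta> - 1) / 2) n"
  proof
    fix \<omega> assume \<omega>: "\<omega> \<in> {\<omega> \<in> space M. b \<le> lam i j n \<omega>}"
    have \<psi>: "0 < \<psi> (real n)" using n(1) psi_pos by simp
    have "\<theta> / \<delta> * I i j * \<psi> (real n) \<le> \<theta> * I i j * level i k"
      using n(2) \<delta>\<theta> I by (simp add: field_simps mult_left_mono)
    also have "\<dots> = b" using I by (simp add: b_def lvl)
    also have "b \<le> lam i j n \<omega>" using \<omega> by simp
    finally have "\<theta> / \<delta> * I i j \<le> lam i j n \<omega> / \<psi> (real n)"
      using \<psi> by (simp add: le_divide_eq)
    then have "I i j * (\<theta> / \<delta> - 1) \<le> lam i j n \<omega> / \<psi> (real n) - I i j"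
      by (simp add: algebra_simps)
    moreover have "I i j * (\<theta> / \<delta> - 1) / 2 < I i j * (\<theta> / \<delta> - 1)"
      using \<delta>\<theta> I by (simp add: field_simps)
    moreover note abs_ge_self[of "lam i j n \<omega> / \<psi> (real n) - I i j"]
    ultimately have "I i j * (\<theta> / \<delta> - 1) / 2 < \<bar>lam i j n \<omega> / \<psi> (real n) - I i j\<bar>"
      by (meson less_le_trans order_trans)
    then show "\<omega> \<in> dev i j (I i j * (\<theta> / \<delta> - 1) / 2) n"
      using \<omega> by (simp add: dev_def)
  qed
  have "measure (P i) {\<omega> \<in> space M. T \<omega> \<le> enat n} \<le>
      (\<Sum>j'\<in>{..N}-{i}. \<alpha> k i j') + exp b * \<alpha> k j i + measure (P i) {\<omega> \<in> space M. b \<le> lam i j n \<omega>}"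
    by (rule prob_stop_le_Csim[OF i D j])
  also have "measure (P i) {\<omega> \<in> space M. b \<le> lam i j n \<omega>} \<le> measure (P i) (dev i j (I i j * (\<theta> / \<delta> - 1) / 2) n)"
    using high dev_in_P[OF i j(1)] by (intro Pi.finite_measure_mono) auto
  also have "\<dots> \<le> (\<Sum>j\<in>{..N}-{i}. measure (P i) (dev i j (I i j * (\<theta> / \<delta> - 1) / 2) n))"
    using j by (intro member_le_sum) auto
  also have "exp b * \<alpha> k j i \<le> (\<Sum>j\<in>{..N}-{i}. \<alpha> k j i powr (1 - \<theta>))"
    unfolding exp_b using j by (intro member_le_sum) auto
  finally show ?thesis by (simp add: early_stop_bound_def)
qed

lemma early_stop_bound_tendsto_0:
  assumes i: "i \<le> N" and \<delta>\<theta>: "0 < \<delta>" "\<delta> < \<theta>" "\<theta> < 1" and n: "filterlim n at_top sequentially"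
  shows "(\<lambda>k. early_stop_bound i k \<delta> \<theta> (n k)) \<longlonglongrightarrow> 0"
proof -
  have "(\<lambda>k. early_stop_bound i k \<delta> \<theta> (n k)) \<longlonglongrightarrow> 0 + 0 + 0"
    unfolding early_stop_bound_def
  proof (intro tendsto_add tendsto_null_sum)
    fix j assume "j \<in> {..N}-{i}"
    then have j: "j \<le> N" "j \<noteq> i" by auto
    show "(\<lambda>k. \<alpha> k i j) \<longlonglongrightarrow> 0" using alpha_tendsto_0[OF i j(1) j(2)[symmetric]] .
    show "(\<lambda>k. \<alpha> k j i powr (1 - \<theta>)) \<longlonglongrightarrow> 0"
      using \<alpha>_range[OF j(1) i j(2)] \<delta>\<theta>
      by (intro tendsto_zero_powrI[OF alpha_tendsto_0[OF j(1) i j(2)] tendsto_const])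
        (auto intro!: always_eventually less_imp_le)
    have "0 < I i j * (\<theta> / \<delta> - 1) / 2"
      using I_pos[OF i j(1) j(2)[symmetric]] \<delta>\<theta> by (simp add: field_simps)
    then show "(\<lambda>k. measure (P i) (dev i j (I i j * (\<theta> / \<delta> - 1) / 2) (n k))) \<longlonglongrightarrow> 0"
      by (intro filterlim_compose[OF measure_dev_tendsto_0[OF i j(1) j(2)[symmetric]] n])
  qed
  then show ?thesis by simp
qed

lemma mom_Csim_ge:
  assumes i: "i \<le> N" and D: "D \<in> Csim M F P N (\<alpha> k)" and \<delta>\<theta>: "0 < \<delta>" "\<delta> < \<theta>"
    and n: "1 \<le> n" "real n \<le> \<Psi> (\<delta> * level i k)"
  shows "ennreal (real (Suc n) powr r * (1 - early_stop_bound i k \<delta> \<theta> n)) \<le> mom (P i) r (fst D)"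
proof -
  obtain T \<delta>' where TD: "D = (T, \<delta>')" by (cases D)
  have \<delta>X: "0 < \<delta> * level i k" using \<delta>\<theta> level_pos[OF i] by simp
  then have "\<psi> (real n) \<le> \<delta> * level i k" using n le_Psi_iff by simp
  then have stop: "measure (P i) {\<omega> \<in> space M. T \<omega> \<le> enat n} \<le> early_stop_bound i k \<delta> \<theta> n"
    using prob_early_stop_le[OF i D[unfolded TD] \<delta>\<theta> n(1)] by simp
  have "{\<omega> \<in> space (F n). T \<omega> \<le> enat n} \<in> sets (F n)"
    using D TD unfolding Csim_def is_stopping_time_def by auto
  then have "{\<omega> \<in> space (P i). T \<omega> \<le> enat n} \<in> sets (P i)"
    unfolding F_space space_P[OF i] by (rule sets_F_in_P[OF i])
  from mom_ge_not_stopped[OF P_prob[OF i] _ this] r_ge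
  have "ennreal (real (Suc n) powr r * (1 - measure (P i) {\<omega> \<in> space M. T \<omega> \<le> enat n})) \<le> mom (P i) r T"
    by (simp add: space_P[OF i])
  moreover have "real (Suc n) powr r * (1 - early_stop_bound i k \<delta> \<theta> n) \<le>
      real (Suc n) powr r * (1 - measure (P i) {\<omega> \<in> space M. T \<omega> \<le> enat n})"
    using stop by (intro mult_left_mono) auto
  ultimately have "ennreal (real (Suc n) powr r * (1 - early_stop_bound i k \<delta> \<theta> n)) \<le> mom (P i) r T"
    by (meson ennreal_leI order_trans)
  then show ?thesis using TD by simp
qed

lemma eventually_mom_Csim_ge:
  assumes i: "i \<le> N" and \<eta>: "0 < \<eta>" "\<eta> < 1"
  shows "\<forall>\<^sub>F k in sequentially. \<forall>D\<in>Csim M F P N (\<alpha> k).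
    ennreal ((1 - \<eta>) * \<Psi> (level i k) powr r) \<le> mom (P i) r (fst D)"
proof -
  obtain \<delta> where \<delta>: "0 < \<delta>" "\<delta> < 1" and reg: "((\<lambda>t. \<Psi> (\<delta> * t) / \<Psi> t) \<longlongrightarrow> L \<delta>) at_top"
    and L\<delta>: "1 - \<eta> < L \<delta> powr r"
    using regular_ratio_below_one[OF \<Psi>_reg_inner \<Psi>_reg_outer \<eta>(1)] by blast
  define \<theta> where "\<theta> = (1 + \<delta>) / 2"
  have \<theta>: "\<delta> < \<theta>" "\<theta> < 1" using \<delta> by (auto simp: \<theta>_def)
  define n where "n k = nat \<lfloor>\<Psi> (\<delta> * level i k)\<rfloor>" for k
  have n_at_top: "filterlim n at_top sequentially"
    unfolding n_def using Psi_level_at_top[OF i \<delta>(1)]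
    by (intro filterlim_compose[OF filterlim_nat_sequentially] filterlim_compose[OF filterlim_floor_sequentially])
  define \<rho> where "\<rho> k = early_stop_bound i k \<delta> \<theta> (n k)" for k
  have \<rho>: "\<rho> \<longlonglongrightarrow> 0"
    unfolding \<rho>_def using early_stop_bound_tendsto_0[OF i \<delta>(1) \<theta> n_at_top] .
  define v where "v k = (\<Psi> (\<delta> * level i k) / \<Psi> (level i k)) powr r * (1 - \<rho> k)" for k
  have "L \<delta> \<noteq> 0" using L\<delta> \<eta> by auto
  then have "v \<longlonglongrightarrow> L \<delta> powr r * (1 - 0)"
    unfolding v_def by (intro tendsto_mult tendsto_powr ratio_Psi_level_tendsto[OF i reg] tendsto_const tendsto_diff \<rho>)
  then have "\<forall>\<^sub>F k in sequentially. 1 - \<eta> < v k"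
    using L\<delta> by (intro order_tendstoD(1)) auto
  moreover have "\<forall>\<^sub>F k in sequentially. 1 \<le> n k"
    using n_at_top by (simp add: filterlim_at_top)
  moreover have "\<forall>\<^sub>F k in sequentially. \<rho> k < 1"
    using \<rho> by (intro order_tendstoD(2)) auto
  ultimately show ?thesis
  proof eventually_elim
    case (elim k)
    define y where "y = \<Psi> (\<delta> * level i k)"
    have "0 < \<delta> * level i k" using \<delta> level_pos[OF i] by simp
    then have y: "0 < y" "real (n k) \<le> y" "y \<le> real (Suc (n k))"
      using Psi_pos[of "\<delta> * level i k"] unfolding y_def n_def by linarith+
    have "0 < \<Psi> (level i k)" using Psi_pos[OF level_pos[OF i]] .
    then have "(1 - \<eta>) * \<Psi> (level i k) powr r \<le> v k * \<Psi> (level i k) powr r"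
      using elim(1) by (intro mult_right_mono) auto
    also have "\<dots> = y powr r * (1 - \<rho> k)"
      using \<open>0 < \<Psi> (level i k)\<close> y(1) by (simp add: v_def y_def powr_divide)
    also have "\<dots> \<le> real (Suc (n k)) powr r * (1 - \<rho> k)"
      using elim(3) y r_ge by (intro mult_right_mono powr_mono2) auto
    finally have bound: "ennreal ((1 - \<eta>) * \<Psi> (level i k) powr r) \<le> ennreal (real (Suc (n k)) powr r * (1 - \<rho> k))"
      by (rule ennreal_leI)
    show ?case
    proof
      fix D assume "D \<in> Csim M F P N (\<alpha> k)"
      from mom_Csim_ge[OF i this \<delta>(1) \<theta>(1) elim(2)] y(2)
      have "ennreal (real (Suc (n k)) powr r * (1 - \<rho> k)) \<le> mom (P i) r (fst D)"
        by (simp add: \<rho>_def y_def)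
      with bound show "ennreal ((1 - \<eta>) * \<Psi> (level i k) powr r) \<le> mom (P i) r (fst D)"
        by (rule order_trans)
    qed
  qed
qed

lemma mom_asymptotics:
  assumes i: "i \<le> N"
  defines "ET \<equiv> \<lambda>k. mom (P i) r (msprt_T N lam (a k))"
    and "IE \<equiv> \<lambda>k. INF D \<in> Csim M F P N (\<alpha> k). mom (P i) r (fst D)"
    and "B \<equiv> \<lambda>k. \<Psi> (level i k) powr r"
  shows "(\<forall>\<^sub>F k in sequentially. ET k < \<infinity>) \<and> (\<lambda>k. enn2real (ET k) / B k) \<longlonglongrightarrow> 1 \<and>
    (\<forall>\<^sub>F k in sequentially. IE k < \<infinity>) \<and> (\<lambda>k. enn2real (IE k) / B k) \<longlonglongrightarrow> 1"
proof -
  have B_pos: "0 < B k" for k unfolding B_def using Psi_pos[OF level_pos[OF i, of k]] by simp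
  have IE_le_ET: "IE k \<le> ET k" for k
  proof -
    have "(msprt_T N lam (a k), d k) \<in> Csim M F P N (\<alpha> k)"
      by (rule msprt_in_Csim[OF F_space d_msprt]) (rule msprt_err)
    then show ?thesis unfolding IE_def ET_def by (rule INF_lower2) simp
  qed
  have bounds: "\<forall>\<^sub>F k in sequentially. ET k < \<infinity> \<and> IE k < \<infinity> \<and>
      (1 - \<eta>) * B k \<le> enn2real (IE k) \<and> enn2real (IE k) \<le> enn2real (ET k) \<and> enn2real (ET k) \<le> (1 + \<eta>) * B k"
    if \<eta>: "0 < \<eta>" "\<eta> < 1" for \<eta>
    using eventually_mom_msprt_le[OF i \<eta>(1)] eventually_mom_Csim_ge[OF i \<eta>]
  proof eventually_elim
    case (elim k)
    have ET: "ET k \<le> ennreal ((1 + \<eta>) * B k)" using elim(1) unfolding ET_def B_def .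
    have IE: "ennreal ((1 - \<eta>) * B k) \<le> IE k" using elim(2) unfolding IE_def B_def by (auto intro: INF_greatest)
    have fin: "ET k < \<top>" "IE k < \<top>" using ET IE_le_ET[of k] by (auto simp: le_less_trans)
    have "(1 - \<eta>) * B k \<le> enn2real (IE k)"
      using enn2real_mono[OF IE fin(2)] \<eta> B_pos[of k] by simp
    moreover have "enn2real (ET k) \<le> (1 + \<eta>) * B k"
      using enn2real_mono[OF ET] \<eta> B_pos[of k] by simp
    ultimately show ?case
      using fin enn2real_mono[OF IE_le_ET fin(1)] by (simp add: infinity_ennreal_def)
  qed
  have "(\<forall>\<^sub>F k in sequentially. ET k < \<infinity>) \<and> (\<forall>\<^sub>F k in sequentially. IE k < \<infinity>)"
    using bounds[of "1 / 2"] by (auto elim: eventually_mono)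
  moreover have "(\<lambda>k. enn2real (ET k) / B k) \<longlonglongrightarrow> 1"
  proof (rule tendsto_divide_one_if_sandwiched[OF B_pos])
    fix \<eta> :: real assume "0 < \<eta>" "\<eta> < 1"
    from bounds[OF this] show "\<forall>\<^sub>F k in sequentially. (1 - \<eta>) * B k \<le> enn2real (ET k) \<and> enn2real (ET k) \<le> (1 + \<eta>) * B k"
      by eventually_elim linarith
  qed
  moreover have "(\<lambda>k. enn2real (IE k) / B k) \<longlonglongrightarrow> 1"
  proof (rule tendsto_divide_one_if_sandwiched[OF B_pos])
    fix \<eta> :: real assume "0 < \<eta>" "\<eta> < 1"
    from bounds[OF this] show "\<forall>\<^sub>F k in sequentially. (1 - \<eta>) * B k \<le> enn2real (IE k) \<and> enn2real (IE k) \<le> (1 + \<eta>) * B k"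
      by eventually_elim linarith
  qed
  ultimately show ?thesis by blast
qed

end

theorem theorem3:
  fixes M :: "'a measure" and S :: "'b measure" and X :: "nat \<Rightarrow> 'a \<Rightarrow> 'b"
    and N :: nat and P :: "nat \<Rightarrow> 'a measure"
    and F :: "nat \<Rightarrow> 'a measure"
    and \<mu> :: "nat \<Rightarrow> 'a measure" and p :: "nat \<Rightarrow> nat \<Rightarrow> 'a \<Rightarrow> real"
    and lam :: "nat \<Rightarrow> nat \<Rightarrow> nat \<Rightarrow> 'a \<Rightarrow> real"
    and \<psi> \<Psi> :: "real \<Rightarrow> real" and L :: "real \<Rightarrow> real"
    and I :: "nat \<Rightarrow> nat \<Rightarrow> real" and r :: real
    and \<alpha> :: "nat \<Rightarrow> nat \<Rightarrow> nat \<Rightarrow> real" and \<alpha>max :: "nat \<Rightarrow> real"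
    and c :: "nat \<Rightarrow> nat \<Rightarrow> real"
    and a :: "nat \<Rightarrow> nat \<Rightarrow> nat \<Rightarrow> real" and d :: "nat \<Rightarrow> 'a \<Rightarrow> nat"
  assumes X_meas: "\<And>t. X t \<in> M \<rightarrow>\<^sub>M S"
    and N_ge: "N \<ge> 1"
    and P_prob: "\<And>i. i \<le> N \<Longrightarrow> prob_space (P i)"
    and P_sets: "\<And>i. i \<le> N \<Longrightarrow> sets (P i) = sets M"
    and F_def: "F = obs_filt M S X"
    and \<mu>_sets: "\<And>n. sets (\<mu> n) = sets (F n)"
    and \<mu>_sfin: "\<And>n. sigma_finite_measure (\<mu> n)"
    and p_meas: "\<And>i n. i \<le> N \<Longrightarrow> p i n \<in> borel_measurable (F n)"
    and p_nonneg: "\<And>i n \<omega>. i \<le> N \<Longrightarrow> p i n \<omega> \<ge> 0"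
    and p_dens: "\<And>i n. i \<le> N \<Longrightarrow>
        restr_to_subalg (P i) (F n) = density (\<mu> n) (\<lambda>\<omega>. ennreal (p i n \<omega>))"
    and mutual_ac: "\<And>i j n. i \<le> N \<Longrightarrow> j \<le> N \<Longrightarrow>
        absolutely_continuous (restr_to_subalg (P i) (F n)) (restr_to_subalg (P j) (F n))"
    and lam_def: "lam = (\<lambda>i j n \<omega>. ln (p i n \<omega> / p j n \<omega>))"
    and \<psi>_mono: "strict_mono_on {0<..} \<psi>"
    and \<psi>_bij: "bij_betw \<psi> {0<..} {0<..}"
    and \<psi>_inf: "filterlim \<psi> at_top at_top"
    and \<Psi>_def: "\<Psi> = the_inv_into {0<..} \<psi>"
    and \<Psi>_inf: "filterlim \<Psi> at_top at_top"
    and \<Psi>_reg_inner: "\<forall>\<^sub>F \<delta> in at 1. ((\<lambda>t. \<Psi> (\<delta> * t) / \<Psi> t) \<longlongrightarrow> L \<delta>) at_top"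
    and \<Psi>_reg_outer: "(L \<longlongrightarrow> 1) (at 1)"
    and I_pos: "\<And>i j. i \<le> N \<Longrightarrow> j \<le> N \<Longrightarrow> i \<noteq> j \<Longrightarrow> I i j > 0"
    and r_ge: "r \<ge> 1"
    and r_complete: "\<And>i j \<epsilon>. i \<le> N \<Longrightarrow> j \<le> N \<Longrightarrow> i \<noteq> j \<Longrightarrow> \<epsilon> > 0 \<Longrightarrow>
        summable (\<lambda>t. real (Suc t) powr (r - 1) *
          measure (P i) {\<omega> \<in> space M. \<bar>lam i j (Suc t) \<omega> / \<psi> (real (Suc t)) - I i j\<bar> > \<epsilon>})
        \<and> ((\<lambda>n. \<Sum>t. real (Suc (t + n)) powr (r - 1) *
          measure (P i) {\<omega> \<in> space M. \<bar>lam i j (Suc (t + n)) \<omega> / \<psi> (real (Suc (t + n))) - I i j\<bar> > \<epsilon>})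
           \<longlonglongrightarrow> 0)"
    and \<alpha>_range: "\<And>k i j. i \<le> N \<Longrightarrow> j \<le> N \<Longrightarrow> i \<noteq> j \<Longrightarrow> 0 < \<alpha> k i j \<and> \<alpha> k i j < 1"
    and \<alpha>max_def: "\<alpha>max = (\<lambda>k. Max {\<alpha> k i j | i j. i \<le> N \<and> j \<le> N \<and> i \<noteq> j})"
    and \<alpha>max_lim: "\<alpha>max \<longlonglongrightarrow> 0"
    and c_range: "\<And>i j. i \<le> N \<Longrightarrow> j \<le> N \<Longrightarrow> i \<noteq> j \<Longrightarrow> 0 < c i j \<and> c i j \<le> 1"
    and c_lim: "\<And>i j. i \<le> N \<Longrightarrow> j \<le> N \<Longrightarrow> i \<noteq> j \<Longrightarrow>
        (\<lambda>k. \<bar>ln (\<alpha> k i j)\<bar> / \<bar>ln (\<alpha>max k)\<bar>) \<longlonglongrightarrow> c i j"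
    and a_pos: "\<And>k i j. i \<le> N \<Longrightarrow> j \<le> N \<Longrightarrow> i \<noteq> j \<Longrightarrow> a k i j > 0"
    and a_asymp: "\<And>i j. i \<le> N \<Longrightarrow> j \<le> N \<Longrightarrow> i \<noteq> j \<Longrightarrow>
        (\<lambda>k. a k j i / ln (1 / \<alpha> k j i)) \<longlonglongrightarrow> 1"
    and d_msprt: "\<And>k. msprt_decision M F N lam (a k) (d k)"
    and msprt_err: "\<And>k i j. i \<le> N \<Longrightarrow> j \<le> N \<Longrightarrow> i \<noteq> j \<Longrightarrow>
        measure (P i) {\<omega> \<in> space M. d k \<omega> = j} \<le> \<alpha> k i j"
  shows "\<forall>i\<le>N.
     let B = (\<lambda>k. \<Psi> (Max {\<bar>ln (\<alpha> k j i)\<bar> / I i j | j. j \<le> N \<and> j \<noteq> i}) powr r);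
         ET = (\<lambda>k. mom (P i) r (msprt_T N lam (a k)));
         Inf_ET = (\<lambda>k. INF D \<in> Csim M F P N (\<alpha> k). mom (P i) r (fst D))
     in (\<forall>\<^sub>F k in sequentially. ET k < \<infinity>) \<and>
        (\<lambda>k. enn2real (ET k) / B k) \<longlonglongrightarrow> 1 \<and>
        (\<forall>\<^sub>F k in sequentially. Inf_ET k < \<infinity>) \<and>
        (\<lambda>k. enn2real (Inf_ET k) / B k) \<longlonglongrightarrow> 1"
proof -
  have r_summable: "summable (\<lambda>t. real (Suc t) powr (r - 1) *
      measure (P i) {\<omega> \<in> space M. \<bar>lam i j (Suc t) \<omega> / \<psi> (real (Suc t)) - I i j\<bar> > \<epsilon>})"
    if "i \<le> N" "j \<le> N" "i \<noteq> j" "\<epsilon> > 0" for i j \<epsilon>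
    using r_complete[OF that] by blast
  interpret msprt_asymptotics M N P F \<mu> p lam \<psi> \<Psi> L I r \<alpha> \<alpha>max a d
  proof (intro msprt_asymptotics.intro llr_model.intro msprt_asymptotics_axioms.intro)
    show "space (F n) = space M" for n using F_def space_obs_filt by simp
    show "sets (F n) \<subseteq> sets M" for n using F_def sets_obs_filt_subset[OF X_meas] by simp
  qed (fact N_ge P_prob P_sets \<mu>_sets p_meas p_nonneg p_dens mutual_ac lam_def \<psi>_mono \<psi>_bij \<Psi>_def
      \<Psi>_inf \<Psi>_reg_inner \<Psi>_reg_outer I_pos r_ge r_summable \<alpha>_range \<alpha>max_def \<alpha>max_lim a_asymp
      d_msprt msprt_err)+
  have "Max {\<bar>ln (\<alpha> k j i)\<bar> / I i j | j. j \<le> N \<and> j \<noteq> i} = level i k" for i k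
    unfolding level_def by (rule arg_cong[where f = Max]) auto
  then show ?thesis using mom_asymptotics unfolding Let_def by presburger
qed

end
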